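(* Let $S_S=S_C=\{0\}$, let $d\in(0,\frac12)$, and let $G_0=(V_0,E_0)$ be a seed geometric graph such that some vertex $u\in V_0$ is isolated ($\deg(u)=0$). Then for every dynamic graph $(G_t=(V_t,E_t))_{t\geq0}$ generated by D3G3 from $G_0$ with these parameters, $n_t=|V_t|\leq\frac{8}{\pi d^2}$ for all $t>0$.
   Context: Let $\mathbb{T}=[0,1)^2$ be the unit torus with toroidal Euclidean distance $\mathrm{dist}$; a geometric graph with threshold $d$ on a finite point set $V\subset\mathbb{T}$ has edges $\{u,v\}$, $u\neq v$, with $\mathrm{dist}(u,v)\leq d$. D3G3 takes $d$, sets $S_S,S_C\subseteq\mathbb{N}$ and a non-null seed geometric graph $G_0$. From $G_t=(V_t,E_t)$, $G_{t+1}$ is obtained by applying simultaneously to each $v\in V_t$ (with $\deg(v)$ its degree in $G_t$): $v\in V_{t+1}$ (same position) iff $\deg(v)\in S_S$; if $\deg(v)\in S_C$, a new vertex (distinct from all previous ones) is added to $V_{t+1}$ at a uniformly random position in $\mathbb{T}$. No other vertices are in $V_{t+1}$; $E_{t+1}$ is given by the geometric rule. *)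

theory Defs
  imports Complex_Main
begin

definition torus :: "(real \<times> real) set" where
  "torus = {0..<1} \<times> {0..<1}"

definition tdist1 :: "real \<Rightarrow> real \<Rightarrow> real" where
  "tdist1 a b = min \<bar>a - b\<bar> (1 - \<bar>a - b\<bar>)"

definition tdist :: "real \<times> real \<Rightarrow> real \<times> real \<Rightarrow> real" where
  "tdist p q = sqrt ((tdist1 (fst p) (fst q))\<^sup>2 + (tdist1 (snd p) (snd q))\<^sup>2)"

definition gdeg :: "real \<Rightarrow> ('v \<Rightarrow> real \<times> real) \<Rightarrow> 'v set \<Rightarrow> 'v \<Rightarrow> nat" where
  "gdeg d pos V v = card {w \<in> V. w \<noteq> v \<and> tdist (pos v) (pos w) \<le> d}"

text \<open>New vertices are fresh (not present at any earlier
  time) and get arbitrary positions in the torus (every realisation of the random choice).\<close>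
definition d3g3_run ::
  "real \<Rightarrow> nat set \<Rightarrow> nat set \<Rightarrow> (nat \<Rightarrow> 'v set) \<Rightarrow> ('v \<Rightarrow> real \<times> real) \<Rightarrow> bool" where
  "d3g3_run d SS SC V pos \<longleftrightarrow>
     finite (V 0) \<and> V 0 \<noteq> {} \<and>
     (\<forall>t. \<forall>v \<in> V t. pos v \<in> torus) \<and>
     (\<forall>t. \<exists>c. inj_on c {v \<in> V t. gdeg d pos (V t) v \<in> SC} \<and>
             (\<forall>v \<in> {v \<in> V t. gdeg d pos (V t) v \<in> SC}. \<forall>s \<le> t. c v \<notin> V s) \<and>
             V (Suc t) = {v \<in> V t. gdeg d pos (V t) v \<in> SS}
                          \<union> c ` {v \<in> V t. gdeg d pos (V t) v \<in> SC})"

end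

theory Submission
  imports Defs "HOL-Analysis.Analysis"
begin

text \<open>
  Only isolated vertices survive, and each of them spawns exactly one fresh vertex, so
  \<open>n\<^sub>t\<close> is twice the number of isolated vertices of \<open>G\<^sub>t\<^sub>-\<^sub>1\<close>. Isolated vertices are pairwise
  more than \<open>d\<close> apart, so the toroidal discs of radius \<open>d/2\<close> around them are disjoint; each
  has area \<open>\<pi>d\<^sup>2/4\<close> (as \<open>d < 1/2\<close>) and the torus has area 1. To make the packing bound
  rigorous, the discs are unrolled to the plane: their translates by \<open>{0..<M}\<^sup>2\<close> are disjoint
  Euclidean discs inside a square of side \<open>M + d\<close>, and \<open>M \<rightarrow> \<infinity>\<close>.
  The isolated vertex of \<open>G\<^sub>0\<close> only prevents extinction; the bound does not need it.
\<close>

lemma disjoint_family_on_balls: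
  fixes c :: "'i \<Rightarrow> 'a::metric_space"
  assumes "\<And>i j. i \<in> S \<Longrightarrow> j \<in> S \<Longrightarrow> i \<noteq> j \<Longrightarrow> 2 * r \<le> dist (c i) (c j)"
  shows "disjoint_family_on (\<lambda>i. ball (c i) r) S"
  unfolding disjoint_family_on_def
proof (intro ballI impI equals0I)
  fix i j z
  assume "i \<in> S" "j \<in> S" "i \<noteq> j" and "z \<in> ball (c i) r \<inter> ball (c j) r"
  then have "dist (c i) z < r" "dist (c j) z < r"
    by (auto simp: dist_commute)
  then have "dist (c i) (c j) < r + r"
    by (rule dist_triangle_less_add)
  with assms[OF \<open>i \<in> S\<close> \<open>j \<in> S\<close> \<open>i \<noteq> j\<close>] show False
    by simp
qed

lemma disjoint_discs_area_le:
  fixes c :: "'i \<Rightarrow> real \<times> real"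
  assumes "finite S" "0 \<le> r"
    and "disjoint_family_on (\<lambda>i. ball (c i) r) S"
    and "(\<Union>i\<in>S. ball (c i) r) \<subseteq> A" "A \<in> sets lborel"
  shows "ennreal (real (card S) * (pi * r\<^sup>2)) \<le> emeasure lborel A"
proof -
  have "ennreal (real (card S) * (pi * r\<^sup>2)) = (\<Sum>i\<in>S. ennreal (pi * r\<^sup>2))"
    by (simp add: ennreal_of_nat_eq_real_of_nat ennreal_mult)
  also have "\<dots> = (\<Sum>i\<in>S. emeasure lborel (ball (c i) r))"
    using \<open>0 \<le> r\<close> by (simp add: emeasure_ball unit_ball_vol_2 power2_eq_square)
  also have "\<dots> = emeasure lborel (\<Union>i\<in>S. ball (c i) r)"
    using assms(1,3) by (intro sum_emeasure) auto
  also have "\<dots> \<le> emeasure lborel A"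
    using assms(4,5) by (rule emeasure_mono)
  finally show ?thesis .
qed

definition shift :: "real \<times> real \<Rightarrow> nat \<times> nat \<Rightarrow> real \<times> real" where
  "shift x k = (fst x + real (fst k), snd x + real (snd k))"

lemma tdist1_le_abs_shift:
  assumes "a \<in> {0..<1}" "b \<in> {0..<1}"
  shows "tdist1 a b \<le> \<bar>(a + real i) - (b + real j)\<bar>"
proof (cases "i = j")
  case True
  then show ?thesis by (simp add: tdist1_def)
next
  case False
  then have "real i \<ge> real j + 1 \<or> real j \<ge> real i + 1" by linarith
  then show ?thesis using assms unfolding tdist1_def by auto
qed

lemma tdist_le_dist_shift:
  assumes "x \<in> torus" "y \<in> torus"
  shows "tdist x y \<le> dist (shift x k) (shift y l)"
proof -
  obtain x1 x2 y1 y2 k1 k2 l1 l2 where eqs: "x = (x1, x2)" "y = (y1, y2)" "k = (k1, k2)" "l = (l1, l2)"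
    by (metis prod.exhaust)
  have "tdist1 x1 y1 \<le> \<bar>(x1 + real k1) - (y1 + real l1)\<bar>"
       "tdist1 x2 y2 \<le> \<bar>(x2 + real k2) - (y2 + real l2)\<bar>"
    using assms eqs by (auto intro!: tdist1_le_abs_shift simp: torus_def)
  moreover have "0 \<le> tdist1 x1 y1" "0 \<le> tdist1 x2 y2"
    using assms eqs by (auto simp: tdist1_def torus_def)
  ultimately have "(tdist1 x1 y1)\<^sup>2 + (tdist1 x2 y2)\<^sup>2
      \<le> \<bar>(x1 + real k1) - (y1 + real l1)\<bar>\<^sup>2 + \<bar>(x2 + real k2) - (y2 + real l2)\<bar>\<^sup>2"
    by (intro add_mono power_mono)
  then show ?thesis
    by (simp add: eqs shift_def tdist_def dist_Pair_Pair dist_real_def)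
qed

lemma one_le_dist_shift:
  assumes "k \<noteq> l"
  shows "1 \<le> dist (shift x k) (shift x l)"
proof -
  obtain k1 k2 l1 l2 where eqs: "k = (k1, k2)" "l = (l1, l2)"
    by (metis prod.exhaust)
  have "1 \<le> \<bar>real k1 - real l1\<bar> \<or> 1 \<le> \<bar>real k2 - real l2\<bar>"
    using assms eqs by (cases "k1 = l1") auto
  then have "1 \<le> (real k1 - real l1)\<^sup>2 \<or> 1 \<le> (real k2 - real l2)\<^sup>2"
    by (metis one_le_power power2_abs)
  then have "1 \<le> (real k1 - real l1)\<^sup>2 + (real k2 - real l2)\<^sup>2"
    by (auto intro: add_increasing add_increasing2)
  then show ?thesis
    by (simp add: eqs shift_def dist_Pair_Pair dist_real_def)
qed

lemma ball_shift_subset_cbox: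
  assumes "x \<in> torus" "k \<in> {0..<M} \<times> {0..<M}"
  shows "ball (shift x k) r \<subseteq> cbox (- r, - r) (real M + r, real M + r)"
proof
  fix z
  assume "z \<in> ball (shift x k) r"
  then have "dist (fst (shift x k)) (fst z) < r" "dist (snd (shift x k)) (snd z) < r"
    using dist_fst_le dist_snd_le order.strict_trans1 mem_ball by blast+
  moreover have "fst (shift x k) \<in> {0..real M}" "snd (shift x k) \<in> {0..real M}"
    using assms by (auto simp: torus_def shift_def)
  ultimately show "z \<in> cbox (- r, - r) (real M + r, real M + r)"
    by (cases z) (auto simp: cbox_Pair_eq dist_real_def)
qed

lemma packing_translates:
  fixes P :: "'a set" and q :: "'a \<Rightarrow> real \<times> real"
  assumes "finite P" "0 < r" "2 * r \<le> 1"
    and torus: "\<And>v. v \<in> P \<Longrightarrow> q v \<in> torus"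
    and far: "\<And>v w. v \<in> P \<Longrightarrow> w \<in> P \<Longrightarrow> v \<noteq> w \<Longrightarrow> 2 * r \<le> tdist (q v) (q w)"
  shows "real (card P) * (real M)\<^sup>2 * (pi * r\<^sup>2) \<le> (real M + 2 * r)\<^sup>2"
proof -
  define S where "S = P \<times> ({0..<M} \<times> {0..<M})"
  define centre where "centre = (\<lambda>(v, k). shift (q v) k)"
  have "finite S"
    using \<open>finite P\<close> by (simp add: S_def)
  have centres_far: "2 * r \<le> dist (centre i) (centre j)"
    if "i \<in> S" "j \<in> S" "i \<noteq> j" for i j
  proof -
    obtain v k w l where ij: "i = (v, k)" "j = (w, l)"
      by (metis prod.exhaust)
    show ?thesis
    proof (cases "v = w")
      case True
      then have "k \<noteq> l"
        using that ij by simp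
      then show ?thesis
        using one_le_dist_shift[of k l "q v"] True ij \<open>2 * r \<le> 1\<close> by (simp add: centre_def)
    next
      case False
      then have "2 * r \<le> tdist (q v) (q w)" "q v \<in> torus" "q w \<in> torus"
        using that ij far torus by (auto simp: S_def)
      then show ?thesis
        using tdist_le_dist_shift[of "q v" "q w" k l] ij by (simp add: centre_def)
    qed
  qed
  have contained: "(\<Union>i\<in>S. ball (centre i) r) \<subseteq> cbox (- r, - r) (real M + r, real M + r)"
  proof (rule UN_least)
    fix i
    assume "i \<in> S"
    then obtain v k where "i = (v, k)" "v \<in> P" "k \<in> {0..<M} \<times> {0..<M}"
      by (auto simp: S_def)
    then show "ball (centre i) r \<subseteq> cbox (- r, - r) (real M + r, real M + r)"
      using ball_shift_subset_cbox torus by (simp add: centre_def)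
  qed
  have "ennreal (real (card S) * (pi * r\<^sup>2)) \<le> emeasure lborel (cbox (- r, - r) (real M + r, real M + r))"
    using \<open>finite S\<close> \<open>0 < r\<close> disjoint_family_on_balls[OF centres_far] contained
    by (intro disjoint_discs_area_le) auto
  also have "\<dots> = ennreal ((real M + 2 * r)\<^sup>2)"
    using \<open>0 < r\<close>
    by (simp add: emeasure_lborel_cbox_eq Basis_prod_def power2_eq_square algebra_simps)
  finally have "real (card S) * (pi * r\<^sup>2) \<le> (real M + 2 * r)\<^sup>2"
    by (subst (asm) ennreal_le_iff) auto
  then show ?thesis
    by (simp add: S_def card_cartesian_product power2_eq_square)
qed

lemma torus_packing:
  fixes P :: "'a set" and q :: "'a \<Rightarrow> real \<times> real"
  assumes "finite P" "0 < r" "2 * r \<le> 1"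
    and "\<And>v. v \<in> P \<Longrightarrow> q v \<in> torus"
    and "\<And>v w. v \<in> P \<Longrightarrow> w \<in> P \<Longrightarrow> v \<noteq> w \<Longrightarrow> 2 * r \<le> tdist (q v) (q w)"
  shows "real (card P) * (pi * r\<^sup>2) \<le> 1"
proof (rule LIMSEQ_le_const)
  show "(\<lambda>M. (1 + 2 * r / real M)\<^sup>2) \<longlonglongrightarrow> 1"
    by (auto intro!: tendsto_eq_intros lim_const_over_n)
  have "real (card P) * (pi * r\<^sup>2) \<le> (1 + 2 * r / real M)\<^sup>2" if "M \<ge> 1" for M
  proof -
    have "(1 + 2 * r / real M)\<^sup>2 = (real M + 2 * r)\<^sup>2 / (real M)\<^sup>2"
      using that by (simp add: field_simps)
    then show ?thesis
      using packing_translates[OF assms, where M = M] that by (simp add: field_simps)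
  qed
  then show "\<exists>N. \<forall>M\<ge>N. real (card P) * (pi * r\<^sup>2) \<le> (1 + 2 * r / real M)\<^sup>2"
    by blast
qed

definition isolated_vertices :: "real \<Rightarrow> ('v \<Rightarrow> real \<times> real) \<Rightarrow> 'v set \<Rightarrow> 'v set" where
  "isolated_vertices d pos V = {v \<in> V. gdeg d pos V v = 0}"

lemma isolated_vertices_far_apart:
  assumes "finite V" "v \<in> isolated_vertices d pos V" "w \<in> isolated_vertices d pos V" "v \<noteq> w"
  shows "d < tdist (pos v) (pos w)"
proof -
  have "{u \<in> V. u \<noteq> v \<and> tdist (pos v) (pos u) \<le> d} = {}"
    using assms(1,2) by (simp add: isolated_vertices_def gdeg_def)
  then show ?thesis
    using assms(3,4) by (auto simp: isolated_vertices_def)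
qed

lemma d3g3_run_finite:
  assumes "d3g3_run d SS SC V pos"
  shows "finite (V t)"
proof (induction t)
  case 0
  then show ?case using assms by (simp add: d3g3_run_def)
next
  case (Suc t)
  obtain c where "V (Suc t) = {v \<in> V t. gdeg d pos (V t) v \<in> SS} \<union> c ` {v \<in> V t. gdeg d pos (V t) v \<in> SC}"
    using assms unfolding d3g3_run_def by blast
  then show ?case
    using Suc by simp
qed

lemma d3g3_run_card_Suc:
  assumes "d3g3_run d SS SC V pos"
  shows "card (V (Suc t)) = card {v \<in> V t. gdeg d pos (V t) v \<in> SS}
                           + card {v \<in> V t. gdeg d pos (V t) v \<in> SC}"
proof -
  let ?S = "{v \<in> V t. gdeg d pos (V t) v \<in> SS}" and ?C = "{v \<in> V t. gdeg d pos (V t) v \<in> SC}"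
  obtain c where c: "inj_on c ?C" "\<forall>v\<in>?C. \<forall>s\<le>t. c v \<notin> V s" "V (Suc t) = ?S \<union> c ` ?C"
    using assms unfolding d3g3_run_def by blast
  have "?S \<inter> c ` ?C = {}"
    using c(2) by auto
  moreover have "finite (V t)"
    using d3g3_run_finite[OF assms] .
  ultimately show ?thesis
    using c(1,3) by (simp add: card_Un_disjoint card_image)
qed

theorem theorem5:
  fixes d :: real and V :: "nat \<Rightarrow> 'v set" and pos :: "'v \<Rightarrow> real \<times> real"
  assumes "0 < d" and "d < 1/2"
    and "d3g3_run d {0} {0} V pos"
    and "\<exists>u \<in> V 0. gdeg d pos (V 0) u = 0"
  shows "\<forall>t > 0. real (card (V t)) \<le> 8 / (pi * d\<^sup>2)"
proof (intro allI impI)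
  fix t :: nat
  assume "t > 0"
  then obtain s where "t = Suc s"
    using gr0_conv_Suc by blast
  let ?I = "isolated_vertices d pos (V s)"
  have card: "card (V t) = 2 * card ?I"
    using d3g3_run_card_Suc[OF assms(3)] \<open>t = Suc s\<close> by (simp add: isolated_vertices_def)
  have packed: "real (card ?I) * (pi * (d / 2)\<^sup>2) \<le> 1"
  proof (rule torus_packing)
    show "finite ?I"
      using d3g3_run_finite[OF assms(3)] by (simp add: isolated_vertices_def)
    show "pos v \<in> torus" if "v \<in> ?I" for v
      using assms(3) that by (auto simp: d3g3_run_def isolated_vertices_def)
    show "2 * (d / 2) \<le> tdist (pos v) (pos w)" if "v \<in> ?I" "w \<in> ?I" "v \<noteq> w" for v w
      using isolated_vertices_far_apart[OF d3g3_run_finite[OF assms(3)] that] by simp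
  qed (use assms(1,2) in auto)
  have "real (card (V t)) * (pi * d\<^sup>2) = 8 * (real (card ?I) * (pi * (d / 2)\<^sup>2))"
    using card by (simp add: power2_eq_square)
  with packed have "real (card (V t)) * (pi * d\<^sup>2) \<le> 8"
    by linarith
  then show "real (card (V t)) \<le> 8 / (pi * d\<^sup>2)"
    using assms(1) by (simp add: pos_le_divide_eq)
qed

end
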